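(* Let $\mathcal A$ be a $\sigma$-structure, $\mathfrak C$ a class of $\sigma$-structures, $\mathcal B$ a $\sigma'$-structure and $c:\mathbb R^+\to\mathbb R^+$ strictly increasing. Suppose $(\phi,(\psi_{\mathcal C})_{\mathcal C\in\mathfrak C})$ is a $c$-reduction from $\mathcal A$ to $\mathcal B$ via $\mathfrak C$, and let $\mathfrak D=\{\phi(\mathcal C):\mathcal C\in\mathfrak C\}$. Then $\mathsf d_{\mathcal B,\mathfrak D}=\Omega\big(\mathsf d_{\mathcal A,\mathfrak C}\circ\lfloor c^{-1}\rfloor\big)$.
   Context: For structures $\mathcal A,\mathcal B$, $\mathsf D(\mathcal A,\mathcal B)$ is the set of all d-representations of $\operatorname{Hom}(\mathcal A,\mathcal B)$ and $\mathsf d(\mathcal A,\mathcal B)=\min_{C\in\mathsf D(\mathcal A,\mathcal B)}\|C\|$. For a class $\mathfrak C$ of structures, $\mathsf d_{\mathcal A,\mathfrak C}:\mathbb N\to\mathbb N$ is $\mathsf d_{\mathcal A,\mathfrak C}(m)=\max\{\mathsf d(\mathcal A,\mathcal C):\mathcal C\in\mathfrak C,\ \|\mathcal C\|\le m\}$, where $\|\mathcal C\|=\sum_{R}|R^{\mathcal C}|$. $\mathfrak C_{\sigma'}$ denotes the class of all $\sigma'$-structures. A $c$-reduction from $\mathcal A$ to $\mathcal B$ via $\mathfrak C$ is a pair $(\phi,(\psi_{\mathcal C})_{\mathcal C\in\mathfrak C})$ with $\phi:\mathfrak C\to\mathfrak C_{\sigma'}$ and $\psi_{\mathcal C}:\mathsf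 D(\mathcal B,\phi(\mathcal C))\to\mathsf D(\mathcal A,\mathcal C)$ such that: (1) for every $n\in\mathbb N$ there is $\mathcal C\in\mathfrak C$ with $\|\phi(\mathcal C)\|\ge n$; (2) $\|\phi(\mathcal C)\|\le c(\|\mathcal C\|)$ for all $\mathcal C\in\mathfrak C$; (3) $\|\psi_{\mathcal C}(C)\|\le\|C\|$ for all $\mathcal C\in\mathfrak C$ and $C\in\mathsf D(\mathcal B,\phi(\mathcal C))$. A factorisation circuit $C$ for finite sets $A,B$ is a finite directed acyclic graph with a unique sink $s$; input gates (no incoming edges) are labelled $\{a\mapsto b\}$, other nodes $\cup$ or $\times$; $\operatorname{dom}(g)$ is $\{a\}$ for an input gate and the union of the children's domains otherwise; $C$ is well-defined if each $\cup$-gate has the same domain as each child and children of each $\times$-gate have pairwise disjoint domains; then $S_g=\{\{a\mapsto b\}\}$ for inputs, the union of the children's sets for $\cup$-gates, and $\{h_1\cup\dots\cup h_r:h_i\in S_{g_i}\}$ for $\times$-gates, $S_C=S_s$. $\|C\|$ is the number of gates plus wires. A d-representation of $\operatorname{Hom}(\mathcal A,\mathcal B)$ is a well-defined factorisation circuit with $S_C=\operatorname{Hom}(\mathcal A,\mathcal B)$. All structures are assumed connected. *)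

theory Defs
  imports Main "HOL-Library.Extended_Nat"
begin

type_synonym 'r sig = "'r set \<times> ('r \<Rightarrow> nat)"

type_synonym ('r, 'a) struct = "'a set \<times> ('r \<Rightarrow> 'a list set)"

definition univ :: "('r, 'a) struct \<Rightarrow> 'a set" where
  "univ S = fst S"

definition rel :: "('r, 'a) struct \<Rightarrow> 'r \<Rightarrow> 'a list set" where
  "rel S = snd S"

definition is_struct :: "'r sig \<Rightarrow> ('r, 'a) struct \<Rightarrow> bool" where
  "is_struct \<sigma> S \<longleftrightarrow> finite (fst \<sigma>) \<and> finite (univ S) \<and>
     (\<forall>r \<in> fst \<sigma>. rel S r \<subseteq> {xs. length xs = snd \<sigma> r \<and> set xs \<subseteq> univ S}) \<and>
     (\<forall>r. r \<notin> fst \<sigma> \<longrightarrow> rel S r = {})"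

definition ssize :: "'r sig \<Rightarrow> ('r, 'a) struct \<Rightarrow> nat" where
  "ssize \<sigma> S = (\<Sum>r \<in> fst \<sigma>. card (rel S r))"

definition gadj :: "('r, 'a) struct \<Rightarrow> 'a \<Rightarrow> 'a \<Rightarrow> bool" where
  "gadj S x y \<longleftrightarrow> (\<exists>r. \<exists>xs \<in> rel S r. x \<in> set xs \<and> y \<in> set xs)"

definition connected_struct :: "('r, 'a) struct \<Rightarrow> bool" where
  "connected_struct S \<longleftrightarrow> univ S \<noteq> {} \<and>
     (\<forall>x \<in> univ S. \<forall>y \<in> univ S. (gadj S)\<^sup>*\<^sup>* x y)"

text \<open>Homomorphisms, represented as their graphs (sets of pairs), so that they
  are directly comparable with the sets produced by factorisation circuits.\<close>
definition hom_set :: "('r, 'a) struct \<Rightarrow> ('r, 'b) struct \<Rightarrow> ('a \<times> 'b) set set" where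
  "hom_set A B = {{(a, f a) | a. a \<in> univ A} | f.
      (\<forall>a \<in> univ A. f a \<in> univ B) \<and> (\<forall>r. \<forall>xs \<in> rel A r. map f xs \<in> rel B r)}"

datatype ('a, 'b) glabel = Inp 'a 'b | UnionG | ProdG

record ('a, 'b) fcirc =
  gates :: "nat set"
  wires :: "(nat \<times> nat) set"   \<comment> \<open>(u, g): u is a child of g\<close>
  lab :: "nat \<Rightarrow> ('a, 'b) glabel"

definition children :: "('a, 'b) fcirc \<Rightarrow> nat \<Rightarrow> nat set" where
  "children C g = {u. (u, g) \<in> wires C}"

definition sink :: "('a, 'b) fcirc \<Rightarrow> nat" where
  "sink C = (THE s. s \<in> gates C \<and> (\<forall>g. (s, g) \<notin> wires C))"

definition valid_circuit :: "'a set \<Rightarrow> 'b set \<Rightarrow> ('a, 'b) fcirc \<Rightarrow> bool" where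
  "valid_circuit A B C \<longleftrightarrow> finite (gates C) \<and> wires C \<subseteq> gates C \<times> gates C \<and>
     acyclic (wires C) \<and>
     (\<exists>!s. s \<in> gates C \<and> (\<forall>g. (s, g) \<notin> wires C)) \<and>
     (\<forall>g \<in> gates C. children C g = {} \<longrightarrow> (\<exists>a \<in> A. \<exists>b \<in> B. lab C g = Inp a b)) \<and>
     (\<forall>g \<in> gates C. children C g \<noteq> {} \<longrightarrow> lab C g = UnionG \<or> lab C g = ProdG)"

inductive in_dom :: "('a, 'b) fcirc \<Rightarrow> nat \<Rightarrow> 'a \<Rightarrow> bool" for C where
  inp: "g \<in> gates C \<Longrightarrow> children C g = {} \<Longrightarrow> lab C g = Inp a b \<Longrightarrow> in_dom C g a"
| step: "g \<in> gates C \<Longrightarrow> (u, g) \<in> wires C \<Longrightarrow> in_dom C u a \<Longrightarrow> in_dom C g a"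

definition gdom :: "('a, 'b) fcirc \<Rightarrow> nat \<Rightarrow> 'a set" where
  "gdom C g = {a. in_dom C g a}"

definition well_defined :: "('a, 'b) fcirc \<Rightarrow> bool" where
  "well_defined C \<longleftrightarrow> (\<forall>g \<in> gates C.
     (lab C g = UnionG \<longrightarrow> (\<forall>u \<in> children C g. gdom C u = gdom C g)) \<and>
     (lab C g = ProdG \<longrightarrow> (\<forall>u \<in> children C g. \<forall>v \<in> children C g.
                           u \<noteq> v \<longrightarrow> gdom C u \<inter> gdom C v = {})))"

inductive in_S :: "('a, 'b) fcirc \<Rightarrow> nat \<Rightarrow> ('a \<times> 'b) set \<Rightarrow> bool" for C where
  inp: "g \<in> gates C \<Longrightarrow> children C g = {} \<Longrightarrow> lab C g = Inp a b \<Longrightarrow> in_S C g {(a, b)}"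
| un: "g \<in> gates C \<Longrightarrow> lab C g = UnionG \<Longrightarrow> (u, g) \<in> wires C \<Longrightarrow> in_S C u h \<Longrightarrow> in_S C g h"
| pr: "g \<in> gates C \<Longrightarrow> lab C g = ProdG \<Longrightarrow> children C g \<noteq> {} \<Longrightarrow>
       (\<forall>u \<in> children C g. in_S C u (f u)) \<Longrightarrow> in_S C g (\<Union>u \<in> children C g. f u)"

definition circ_set :: "('a, 'b) fcirc \<Rightarrow> ('a \<times> 'b) set set" where
  "circ_set C = {h. in_S C (sink C) h}"

definition csize :: "('a, 'b) fcirc \<Rightarrow> nat" where
  "csize C = card (gates C) + card (wires C)"

definition Dreps :: "('r, 'a) struct \<Rightarrow> ('r, 'b) struct \<Rightarrow> ('a, 'b) fcirc set" where
  "Dreps A B = {C. valid_circuit (univ A) (univ B) C \<and> well_defined C \<and>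
                   circ_set C = hom_set A B}"

text \<open>\<open>d(A,B)\<close>; the minimum over the empty set is \<open>\<infinity>\<close>.\<close>
definition dmin :: "('r, 'a) struct \<Rightarrow> ('r, 'b) struct \<Rightarrow> enat" where
  "dmin A B = (INF C \<in> Dreps A B. enat (csize C))"

text \<open>\<open>d_{A,K}(m)\<close>; the maximum over the empty set is 0.\<close>
definition dclass :: "'r sig \<Rightarrow> ('r, 'a) struct \<Rightarrow> ('r, 'c) struct set \<Rightarrow> nat \<Rightarrow> enat" where
  "dclass \<sigma> A K m = (SUP C \<in> {C \<in> K. ssize \<sigma> C \<le> m}. dmin A C)"

definition c_reduction ::
  "'r sig \<Rightarrow> 's sig \<Rightarrow> (real \<Rightarrow> real) \<Rightarrow> ('r, 'a) struct \<Rightarrow> ('s, 'b) struct \<Rightarrow>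
   ('r, 'c) struct set \<Rightarrow> (('r, 'c) struct \<Rightarrow> ('s, 'd) struct) \<Rightarrow>
   (('r, 'c) struct \<Rightarrow> ('b, 'd) fcirc \<Rightarrow> ('a, 'c) fcirc) \<Rightarrow> bool" where
  "c_reduction \<sigma> \<sigma>' c A B K \<phi> \<psi> \<longleftrightarrow>
     (\<forall>C \<in> K. is_struct \<sigma>' (\<phi> C)) \<and>
     (\<forall>C \<in> K. \<forall>E \<in> Dreps B (\<phi> C). \<psi> C E \<in> Dreps A C) \<and>
     (\<forall>n. \<exists>C \<in> K. ssize \<sigma>' (\<phi> C) \<ge> n) \<and>
     (\<forall>C \<in> K. real (ssize \<sigma>' (\<phi> C)) \<le> c (real (ssize \<sigma> C))) \<and>
     (\<forall>C \<in> K. \<forall>E \<in> Dreps B (\<phi> C). csize (\<psi> C E) \<le> csize E)"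

end

theory Submission
  imports Defs
begin

text \<open>The reduction even gives the bound with constant 1. Every circuit for
  \<open>Hom(B, \<phi> C)\<close> is turned by \<open>\<psi>\<close> into a circuit for \<open>Hom(A, C)\<close> that is no
  larger, so \<open>d(A, C) \<le> d(B, \<phi> C)\<close>. If \<open>\<parallel>C\<parallel> \<le> \<lfloor>c\<^sup>-\<^sup>1(n)\<rfloor>\<close>, monotonicity of \<open>c\<close>
  gives \<open>\<parallel>\<phi> C\<parallel> \<le> c(\<parallel>C\<parallel>) \<le> n\<close>, so every term of the supremum defining
  \<open>d_{A,\<CC>}(\<lfloor>c\<^sup>-\<^sup>1(n)\<rfloor>)\<close> is dominated by a term of the one defining \<open>d_{B,\<DD>}(n)\<close>.\<close>

lemma dmin_le_dmin_if_shrinking_map: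
  assumes "\<And>E. E \<in> Dreps B D \<Longrightarrow> \<psi> E \<in> Dreps A C \<and> csize (\<psi> E) \<le> csize E"
  shows "dmin A C \<le> dmin B D"
  unfolding dmin_def
proof (rule INF_greatest)
  fix E assume E: "E \<in> Dreps B D"
  have "(INF E' \<in> Dreps A C. enat (csize E')) \<le> enat (csize (\<psi> E))"
    using assms[OF E] by (intro INF_lower) auto
  also have "\<dots> \<le> enat (csize E)"
    using assms[OF E] by simp
  finally show "(INF E' \<in> Dreps A C. enat (csize E')) \<le> enat (csize E)" .
qed

lemma dclass_le_dclass_image:
  assumes "\<And>C. C \<in> K \<Longrightarrow> dmin A C \<le> dmin B (\<phi> C)"
    and "\<And>C. C \<in> K \<Longrightarrow> ssize \<sigma> C \<le> m \<Longrightarrow> ssize \<sigma>' (\<phi> C) \<le> n"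
  shows "dclass \<sigma> A K m \<le> dclass \<sigma>' B (\<phi> ` K) n"
  unfolding dclass_def
proof (rule SUP_least)
  fix C assume "C \<in> {C \<in> K. ssize \<sigma> C \<le> m}"
  then have C: "C \<in> K" "ssize \<sigma> C \<le> m" by auto
  then have "\<phi> C \<in> {D \<in> \<phi> ` K. ssize \<sigma>' D \<le> n}"
    using assms(2) by auto
  then have "dmin B (\<phi> C) \<le> (SUP D \<in> {D \<in> \<phi> ` K. ssize \<sigma>' D \<le> n}. dmin B D)"
    by (rule SUP_upper)
  with assms(1)[OF C(1)] show "dmin A C \<le> (SUP D \<in> {D \<in> \<phi> ` K. ssize \<sigma>' D \<le> n}. dmin B D)"
    by (rule order.trans)
qed

lemma le_at_floor_inv_into:
  fixes c :: "real \<Rightarrow> real"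
  assumes "bij_betw c {0<..} {0<..}" and "strict_mono_on {0<..} c"
    and "0 < y" and "0 < s" and "s \<le> nat \<lfloor>inv_into {0<..} c y\<rfloor>"
  shows "c (real s) \<le> y"
proof -
  define x where "x = inv_into {0<..} c y"
  have x: "x \<in> {0<..}" "c x = y"
    using assms(1,3) unfolding x_def bij_betw_def by (metis greaterThan_iff inv_into_into f_inv_into_f)+
  have "real s \<le> x"
    using assms(4,5) unfolding x_def[symmetric] by linarith
  then have "c (real s) \<le> c x"
    using assms(2,4) x(1) by (cases "real s = x") (auto simp: strict_mono_on_def intro: less_imp_le)
  with x(2) show ?thesis by simp
qed

theorem lemma6p2:
  fixes \<sigma> :: "'r sig" and \<sigma>' :: "'s sig"
    and A :: "('r, 'a) struct" and K :: "('r, 'c) struct set"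
    and B :: "('s, 'b) struct" and c :: "real \<Rightarrow> real"
    and \<phi> :: "('r, 'c) struct \<Rightarrow> ('s, 'd) struct"
    and \<psi> :: "('r, 'c) struct \<Rightarrow> ('b, 'd) fcirc \<Rightarrow> ('a, 'c) fcirc"
  assumes "is_struct \<sigma> A" and "connected_struct A"
    and "\<forall>C \<in> K. is_struct \<sigma> C \<and> connected_struct C"
    and "is_struct \<sigma>' B" and "connected_struct B"
    and "\<forall>C \<in> K. connected_struct (\<phi> C)"
    and "bij_betw c {0<..} {0<..}" and "strict_mono_on {0<..} c"
    and "c_reduction \<sigma> \<sigma>' c A B K \<phi> \<psi>"
  shows "\<exists>k::nat. \<forall>\<^sub>F n in sequentially.
           dclass \<sigma> A K (nat \<lfloor>inv_into {0<..} c (real n)\<rfloor>) \<le> of_nat k * dclass \<sigma>' B (\<phi> ` K) n"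
proof -
  have size_bound: "\<And>C. C \<in> K \<Longrightarrow> real (ssize \<sigma>' (\<phi> C)) \<le> c (real (ssize \<sigma> C))"
    using assms(9) unfolding c_reduction_def by blast
  have dmin_le: "\<And>C. C \<in> K \<Longrightarrow> dmin A C \<le> dmin B (\<phi> C)"
    using assms(9) unfolding c_reduction_def by (metis dmin_le_dmin_if_shrinking_map)
  \<comment> \<open>\<open>c 0\<close> lies outside the domain of \<open>c\<close>, but it bounds the images of empty structures.\<close>
  obtain N :: nat where N: "c 0 \<le> real N"
    using real_arch_simple by blast
  have "dclass \<sigma> A K (nat \<lfloor>inv_into {0<..} c (real n)\<rfloor>) \<le> of_nat 1 * dclass \<sigma>' B (\<phi> ` K) n"
    if n: "n \<ge> max N 1" for n
  proof -
    have "ssize \<sigma>' (\<phi> C) \<le> n"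
      if "C \<in> K" and "ssize \<sigma> C \<le> nat \<lfloor>inv_into {0<..} c (real n)\<rfloor>" for C
    proof -
      have "c (real (ssize \<sigma> C)) \<le> real n"
        using N n le_at_floor_inv_into[OF assms(7,8) _ _ that(2)]
        by (cases "ssize \<sigma> C = 0") auto
      then show ?thesis
        using size_bound[OF that(1)] by simp
    qed
    then show ?thesis
      using dclass_le_dclass_image[OF dmin_le] by simp
  qed
  then show ?thesis
    unfolding eventually_sequentially by blast
qed

end
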